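(* Fix positive integers $n$, $k\le n$ and $h$, and an integer $t\ge 0$. Pick an exact pattern $\rho$ of length $k$ from $[n]$ uniformly at random (i.e., a uniformly random sequence of $k$ distinct elements of $[n]$). Then the probability that the set intersection $\rho\cap(\rho+h)$ has size at least $t$ and there exists a permutation $\pi\in S_n$ such that $\rho$ and $\rho+h$ are both exact patterns in $\pi$ is at most $$\frac{2^{2k-t}k^{k-t}}{k!}.$$
   Context: For a sequence $\sigma=(\sigma(1),\dots,\sigma(n))$ of distinct integers (e.g. a permutation $\pi\in S_n$ written in one-line notation), an exact pattern of $\sigma$ is a sequence $\rho=(\rho(1),\dots,\rho(k))$ of distinct integers such that there are indices $1\le i_1<\dots<i_k\le n$ with $\sigma(i_j)=\rho(j)$ for all $j$. An exact pattern of length $k$ from $[n]$ is any sequence of $k$ distinct elements of $[n]$. For a sequence $\rho$ and integer $h$, $\rho+h$ is the sequence $(\rho(1)+h,\dots,\rho(k)+h)$, and $\rho\cap(\rho+h)$ denotes the intersection of the underlying sets. *)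

theory Defs
  imports Complex_Main "HOL-Library.Sublist"
begin

definition exact_pattern :: "int list \<Rightarrow> int list \<Rightarrow> bool" where
  "exact_pattern \<rho> \<sigma> \<longleftrightarrow> distinct \<rho> \<and> subseq \<rho> \<sigma>"

definition perms :: "nat \<Rightarrow> int list set" where
  "perms n = {\<pi>. distinct \<pi> \<and> set \<pi> = {1..int n}}"

definition patterns :: "nat \<Rightarrow> nat \<Rightarrow> int list set" where
  "patterns n k = {\<rho>. length \<rho> = k \<and> distinct \<rho> \<and> set \<rho> \<subseteq> {1..int n}}"

definition shift :: "int list \<Rightarrow> int \<Rightarrow> int list" where
  "shift \<rho> h = map (\<lambda>x. x + h) \<rho>"

end

theory Submission
  imports Defs "HOL-Library.FuncSet" "HOL-Combinatorics.Multiset_Permutations"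
begin

(* Group the patterns by their underlying set S, |S| = k.  Every group has k! members, so it
   suffices to show that for fixed S with I = |S \<inter> (S + h)| \<ge> t at most
   2^(2k - I) k^(k - I) \<le> 2^(2k - t) k^(k - t) orderings rho of S embed together with rho + h
   into one permutation.  Restricting such a permutation to S \<union> (S + h) gives a sequence sigma
   of length 2k - I containing rho and rho + h.  Then rho is determined by the word recording
   which entries of sigma lie in S and by the positions in rho of the k - I elements of
   S - (S + h): comparing two candidates by increasing value, each entry of sigma either lies in
   S - (S + h), where the recorded positions fix it, or equals rho(j) + h for a smaller entry rho(j). *)

lemma set_subseq: "subseq xs ys \<Longrightarrow> set xs \<subseteq> set ys"
  by (induction rule: list_emb.induct) auto

lemma filter_mem_subseq:
  "subseq xs ys \<Longrightarrow> distinct ys \<Longrightarrow> filter (\<lambda>x. x \<in> set xs) ys = xs"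
proof (induction rule: list_emb.induct)
  case (list_emb_Nil ys)
  then show ?case by simp
next
  case (list_emb_Cons xs ys y)
  then have "y \<notin> set xs" using set_subseq by fastforce
  then show ?case using list_emb_Cons by simp
next
  case (list_emb_Cons2 x y xs ys)
  then have "filter (\<lambda>z. z \<in> set (x # xs)) ys = filter (\<lambda>z. z \<in> set xs) ys"
    by (intro filter_cong) auto
  then show ?case using list_emb_Cons2 by simp
qed

lemma map_eq_iff_zip:
  "map f xs = map f ys \<longleftrightarrow> length xs = length ys \<and> (\<forall>(x, y) \<in> set (zip xs ys). f x = f y)"
  by (simp add: list_all2_iff[symmetric] list.rel_map list.rel_eq[symmetric])

lemma zip_filter_eq_mask:
  "map P xs = map P ys \<Longrightarrow> zip (filter P xs) (filter P ys) = filter (\<lambda>(x, y). P x) (zip xs ys)"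
proof (induction xs arbitrary: ys)
  case Nil
  then show ?case by simp
next
  case (Cons x xs)
  then show ?case by (cases ys) auto
qed

definition is_merge :: "'a list \<Rightarrow> 'a list \<Rightarrow> 'a list \<Rightarrow> bool" where
  "is_merge \<sigma> xs ys \<longleftrightarrow> distinct \<sigma> \<and> set \<sigma> = set xs \<union> set ys \<and>
     filter (\<lambda>x. x \<in> set xs) \<sigma> = xs \<and> filter (\<lambda>x. x \<in> set ys) \<sigma> = ys"

lemma is_merge_filter:
  assumes "distinct \<pi>" "subseq xs \<pi>" "subseq ys \<pi>"
  shows "is_merge (filter (\<lambda>x. x \<in> set xs \<union> set ys) \<pi>) xs ys"
proof -
  have "filter (\<lambda>x. x \<in> set zs) (filter (\<lambda>x. x \<in> set xs \<union> set ys) \<pi>) = zs"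
    if "zs = xs \<or> zs = ys" for zs
  proof -
    have "(\<lambda>x. x \<in> set xs \<union> set ys \<and> x \<in> set zs) = (\<lambda>x. x \<in> set zs)"
      using that by auto
    then show ?thesis
      using that assms filter_mem_subseq[of zs \<pi>] by (auto simp: filter_filter)
  qed
  moreover have "set xs \<union> set ys \<subseteq> set \<pi>"
    using assms set_subseq by blast
  ultimately show ?thesis
    unfolding is_merge_def using assms(1) by auto
qed

lemma diagonal_by_descent:
  fixes Z :: "(int \<times> int) set" and h :: int
  assumes "finite Z" and "0 < h"
    and descend: "\<And>a b. (a, b) \<in> Z \<Longrightarrow> a \<noteq> b \<Longrightarrow> (a - h, b - h) \<in> Z"
    and "(a, b) \<in> Z"
  shows "a = b"
proof (rule ccontr)
  assume "a \<noteq> b"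
  define bad where "bad = {a. \<exists>b. (a, b) \<in> Z \<and> a \<noteq> b}"
  have "finite bad"
    by (rule finite_subset[of _ "fst ` Z"]) (force simp: bad_def \<open>finite Z\<close>)+
  moreover have "a \<in> bad"
    using \<open>(a, b) \<in> Z\<close> \<open>a \<noteq> b\<close> unfolding bad_def by blast
  ultimately obtain m m' where m: "m = Min bad" "(m, m') \<in> Z" "m \<noteq> m'"
    using Min_in[of bad] unfolding bad_def by blast
  then have "m - h \<in> bad"
    using descend[OF m(2,3)] unfolding bad_def by auto
  then show False
    using Min_le[OF \<open>finite bad\<close>] m(1) \<open>0 < h\<close> by fastforce
qed

lemma is_merge_shift_eqI:
  fixes h :: int
  assumes "0 < h"
    and merge1: "is_merge \<sigma>1 \<rho>1 (shift \<rho>1 h)" and merge2: "is_merge \<sigma>2 \<rho>2 (shift \<rho>2 h)"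
    and same_set: "set \<rho>1 = set \<rho>2"
    and same_mask: "map (\<lambda>x. x \<in> set \<rho>1) \<sigma>1 = map (\<lambda>x. x \<in> set \<rho>1) \<sigma>2"
    and agree: "\<forall>(a, b) \<in> set (zip \<rho>1 \<rho>2).
      a \<notin> set (shift \<rho>1 h) \<or> b \<notin> set (shift \<rho>1 h) \<longrightarrow> a = b"
  shows "\<rho>1 = \<rho>2"
proof -
  define S where "S = set \<rho>1"
  define T where "T = set (shift \<rho>1 h)"
  define Z where "Z = set (zip \<sigma>1 \<sigma>2)"
  have T2: "set (shift \<rho>2 h) = T"
    unfolding T_def shift_def using same_set by simp
  have \<sigma>1: "set \<sigma>1 = S \<union> T" "filter (\<lambda>x. x \<in> S) \<sigma>1 = \<rho>1"
    "filter (\<lambda>x. x \<in> T) \<sigma>1 = shift \<rho>1 h"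
    using merge1 unfolding is_merge_def S_def T_def by auto
  have \<sigma>2: "set \<sigma>2 = S \<union> T" "filter (\<lambda>x. x \<in> S) \<sigma>2 = \<rho>2"
    "filter (\<lambda>x. x \<in> T) \<sigma>2 = shift \<rho>2 h"
    using merge2 same_set T2 unfolding is_merge_def S_def by auto
  have mask_S: "a \<in> S \<longleftrightarrow> b \<in> S" if "(a, b) \<in> Z" for a b
    using same_mask that unfolding map_eq_iff_zip Z_def S_def by auto
  have zip_S: "set (zip \<rho>1 \<rho>2) = {(a, b) \<in> Z. a \<in> S}"
    using zip_filter_eq_mask[OF same_mask] \<sigma>1 \<sigma>2 unfolding Z_def S_def by auto
  have agree_Z: "a = b" if "(a, b) \<in> Z" "a \<in> S" "a \<notin> T \<or> b \<notin> T" for a b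
    using agree that zip_S unfolding T_def by auto
  have mask_T: "a \<in> T \<longleftrightarrow> b \<in> T" if "(a, b) \<in> Z" for a b
  proof (cases "a \<in> S")
    case True
    then show ?thesis using agree_Z[OF that] by blast
  next
    case False
    moreover have "a \<in> set \<sigma>1" "b \<in> set \<sigma>2"
      using that unfolding Z_def by (auto dest: set_zip_leftD set_zip_rightD)
    ultimately show ?thesis using mask_S[OF that] \<sigma>1(1) \<sigma>2(1) by auto
  qed
  have "map (\<lambda>x. x \<in> T) \<sigma>1 = map (\<lambda>x. x \<in> T) \<sigma>2"
    using mask_T same_mask unfolding map_eq_iff_zip Z_def by auto
  from zip_filter_eq_mask[OF this]
  have zip_T: "set (zip (shift \<rho>1 h) (shift \<rho>2 h)) = {(a, b) \<in> Z. a \<in> T}"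
    using \<sigma>1 \<sigma>2 unfolding Z_def by auto
  \<comment> \<open>An off-diagonal pair (a, b) has a outside S - T, so it is the image under +h of the
    pair of entries at the same index of \<rho>1 and \<rho>2, which is again off-diagonal.\<close>
  have descend: "(a - h, b - h) \<in> Z" if "(a, b) \<in> Z" "a \<noteq> b" for a b
  proof -
    have "a \<in> set \<sigma>1"
      using that(1) unfolding Z_def by (auto dest: set_zip_leftD)
    then have "a \<in> T"
      using agree_Z[OF that(1)] that(2) \<sigma>1(1) by auto
    then have "(a, b) \<in> set (zip (shift \<rho>1 h) (shift \<rho>2 h))"
      using zip_T that(1) by blast
    then have "(a - h, b - h) \<in> set (zip \<rho>1 \<rho>2)"
      unfolding shift_def zip_map_map by auto
    then show ?thesis using zip_S by blast
  qed
  have diagonal: "a = b" if "(a, b) \<in> Z" for a b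
    using diagonal_by_descent[of Z h] descend that \<open>0 < h\<close> unfolding Z_def by blast
  have "length \<rho>1 = length \<rho>2"
    using merge1 merge2 same_set distinct_card unfolding is_merge_def
    by (metis distinct_filter)
  then show ?thesis
    using diagonal zip_S unfolding list_eq_iff_zip_eq by auto
qed

\<comment> \<open>The index of x in a distinct list xs; unspecified if x is not in xs.\<close>
definition position :: "'a list \<Rightarrow> 'a \<Rightarrow> nat" where
  "position xs = inv_into {..<length xs} ((!) xs)"

lemma position_nth: "distinct xs \<Longrightarrow> i < length xs \<Longrightarrow> position xs (xs ! i) = i"
  unfolding position_def by (simp add: inv_into_f_f inj_on_nth)

lemma nth_position:
  assumes "x \<in> set xs"
  shows "xs ! position xs x = x" and "position xs x < length xs"
proof -
  have x: "x \<in> (!) xs ` {..<length xs}"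
    using assms by (metis in_set_conv_nth image_eqI lessThan_iff)
  show "xs ! position xs x = x" "position xs x < length xs"
    unfolding position_def using f_inv_into_f[OF x] inv_into_into[OF x] by auto
qed

lemma eq_if_same_position:
  assumes "distinct xs" "distinct ys" "set xs = set ys"
    and same_pos: "\<forall>x \<in> A. position xs x = position ys x"
    and "(a, b) \<in> set (zip xs ys)" "a \<in> A \<or> b \<in> A"
  shows "a = b"
proof -
  obtain i where i: "i < length xs" "i < length ys" "a = xs ! i" "b = ys ! i"
    using \<open>(a, b) \<in> set (zip xs ys)\<close> by (auto simp: set_zip)
  then have "a \<in> set ys" "b \<in> set xs"
    using \<open>set xs = set ys\<close> nth_mem by blast+
  show "a = b"
  proof (cases "a \<in> A")
    case True
    then have "position ys a = i"
      using same_pos position_nth[OF \<open>distinct xs\<close> i(1)] i(3) by simp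
    then show ?thesis using nth_position(1)[OF \<open>a \<in> set ys\<close>] i(4) by simp
  next
    case False
    then have "position xs b = i"
      using \<open>a \<in> A \<or> b \<in> A\<close> same_pos position_nth[OF \<open>distinct ys\<close> i(2)] i(4) by simp
    then show ?thesis using nth_position(1)[OF \<open>b \<in> set xs\<close>] i(3) by simp
  qed
qed

lemma card_shift_mergeable_le:
  fixes S :: "int set" and h :: int
  assumes "finite S" and "0 < h"
  defines "T \<equiv> (\<lambda>x. x + h) ` S"
  shows "card {\<rho> \<in> permutations_of_set S. \<exists>\<sigma>. is_merge \<sigma> \<rho> (shift \<rho> h)}
    \<le> 2 ^ card (S \<union> T) * card S ^ card (S - T)"
    (is "card ?M \<le> _")
proof -
  define masks where "masks = {bs :: bool list. set bs \<subseteq> UNIV \<and> length bs = card (S \<union> T)}"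
  define merge where "merge \<rho> = (SOME \<sigma>. is_merge \<sigma> \<rho> (shift \<rho> h))" for \<rho>
  define code where "code \<rho> = (map (\<lambda>x. x \<in> S) (merge \<rho>), restrict (position \<rho>) (S - T))" for \<rho>
  have M: "distinct \<rho>" "set \<rho> = S" "set (shift \<rho> h) = T" "length \<rho> = card S"
    "is_merge (merge \<rho>) \<rho> (shift \<rho> h)" if "\<rho> \<in> ?M" for \<rho>
    using that unfolding merge_def permutations_of_set_def shift_def T_def
    by (auto intro: someI_ex simp: distinct_card[symmetric])
  have "inj_on code ?M"
  proof (rule inj_onI)
    fix \<rho>1 \<rho>2 assume \<rho>: "\<rho>1 \<in> ?M" "\<rho>2 \<in> ?M" and "code \<rho>1 = code \<rho>2"
    then have mask: "map (\<lambda>x. x \<in> S) (merge \<rho>1) = map (\<lambda>x. x \<in> S) (merge \<rho>2)"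
      and "restrict (position \<rho>1) (S - T) = restrict (position \<rho>2) (S - T)"
      unfolding code_def by auto
    then have same_pos: "\<forall>x \<in> S - T. position \<rho>1 x = position \<rho>2 x"
      by (metis restrict_apply')
    have "\<forall>(a, b) \<in> set (zip \<rho>1 \<rho>2). a \<notin> T \<or> b \<notin> T \<longrightarrow> a = b"
    proof clarify
      fix a b assume ab: "(a, b) \<in> set (zip \<rho>1 \<rho>2)" and "a \<notin> T \<or> b \<notin> T"
      moreover have "a \<in> S" "b \<in> S"
        using ab M(2)[OF \<rho>(1)] M(2)[OF \<rho>(2)] by (auto dest: set_zip_leftD set_zip_rightD)
      ultimately show "a = b"
        using eq_if_same_position[OF M(1)[OF \<rho>(1)] M(1)[OF \<rho>(2)] _ same_pos ab]
          M(2)[OF \<rho>(1)] M(2)[OF \<rho>(2)] by blast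
    qed
    then show "\<rho>1 = \<rho>2"
      using is_merge_shift_eqI[OF \<open>0 < h\<close> M(5)[OF \<rho>(1)] M(5)[OF \<rho>(2)]] mask
        M[OF \<rho>(1)] M[OF \<rho>(2)]
      by simp
  qed
  moreover have "code ` ?M \<subseteq> masks \<times> (S - T \<rightarrow>\<^sub>E {..<card S})"
  proof (rule image_subsetI)
    fix \<rho> assume \<rho>: "\<rho> \<in> ?M"
    then have "length (merge \<rho>) = card (S \<union> T)"
      using M[OF \<rho>] unfolding is_merge_def by (simp add: distinct_card[symmetric])
    moreover have "position \<rho> x < card S" if "x \<in> S" for x
      using nth_position(2)[of x \<rho>] M[OF \<rho>] that by simp
    ultimately show "code \<rho> \<in> masks \<times> (S - T \<rightarrow>\<^sub>E {..<card S})"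
      unfolding code_def masks_def by auto
  qed
  ultimately have "card ?M \<le> card (masks \<times> (S - T \<rightarrow>\<^sub>E {..<card S}))"
    using \<open>finite S\<close> unfolding masks_def
    by (intro card_inj_on_le finite_cartesian_product finite_lists_length_eq finite_PiE) simp_all
  also have "\<dots> = 2 ^ card (S \<union> T) * card S ^ card (S - T)"
    using \<open>finite S\<close> card_lists_length_eq[of "UNIV :: bool set" "card (S \<union> T)"]
    by (simp add: masks_def card_cartesian_product card_PiE)
  finally show ?thesis .
qed

lemma card_shift_mergeable_le_powi:
  fixes S :: "int set" and h :: int and t :: nat
  assumes "finite S" and "S \<noteq> {}" and "0 < h" and "t \<le> card (S \<inter> (\<lambda>x. x + h) ` S)"
  shows "real (card {\<rho> \<in> permutations_of_set S. \<exists>\<sigma>. is_merge \<sigma> \<rho> (shift \<rho> h)})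
    \<le> 2 powi (2 * int (card S) - int t) * real (card S) powi (int (card S) - int t)"
proof -
  define T where "T = (\<lambda>x. x + h) ` S"
  define k where "k = card S"
  define I where "I = card (S \<inter> T)"
  have "card T = k"
    unfolding T_def k_def by (simp add: card_image)
  then have card_Un: "card (S \<union> T) = 2 * k - I" and card_Diff: "card (S - T) = k - I" and "I \<le> k"
    using card_Un_Int[of S T] card_Diff_subset_Int[of S T] card_mono[of S "S \<inter> T"] \<open>finite S\<close>
    unfolding T_def k_def I_def by auto
  have "t \<le> I" "1 \<le> k"
    using assms unfolding T_def I_def k_def by (auto simp: Suc_le_eq card_gt_0_iff)
  have "real (card {\<rho> \<in> permutations_of_set S. \<exists>\<sigma>. is_merge \<sigma> \<rho> (shift \<rho> h)})
      \<le> real (2 ^ card (S \<union> T) * k ^ card (S - T))"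
    using card_shift_mergeable_le[OF \<open>finite S\<close> \<open>0 < h\<close>] unfolding T_def k_def of_nat_le_iff .
  also have "\<dots> = 2 powi (2 * int k - int I) * real k powi (int k - int I)"
    using \<open>I \<le> k\<close> by (simp add: card_Un card_Diff power_int_of_nat[symmetric] of_nat_diff)
  also have "\<dots> \<le> 2 powi (2 * int k - int t) * real k powi (int k - int t)"
    using \<open>t \<le> I\<close> \<open>1 \<le> k\<close> by (intro mult_mono power_int_increasing) auto
  finally show ?thesis
    unfolding k_def .
qed

lemma card_ratio_le_by_fibres:
  fixes f :: "'a \<Rightarrow> 'b" and b :: real
  assumes "finite A" and "0 < c" and "0 \<le> b"
    and fibre_card: "\<And>x. x \<in> A \<Longrightarrow> card {y \<in> A. f y = f x} = c"
    and fibre_bound: "\<And>x. x \<in> A \<Longrightarrow> P x \<Longrightarrow> card {y \<in> A. f y = f x \<and> P y} \<le> b"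
  shows "card {x \<in> A. P x} / card A \<le> b / c"
proof -
  have "card A = (\<Sum>v \<in> f ` A. card {y \<in> A. f y = v})"
    using sum.group[of A "f ` A" f "\<lambda>_. 1 :: nat"] \<open>finite A\<close> by simp
  also have "\<dots> = (\<Sum>v \<in> f ` A. c)"
    using fibre_card by (intro sum.cong) auto
  finally have card_A: "card A = c * card (f ` A)"
    by simp
  have "f ` {x \<in> A. P x} \<subseteq> f ` A"
    by blast
  then have "card {x \<in> A. P x} = (\<Sum>v \<in> f ` A. card {y \<in> A. f y = v \<and> P y})"
    using sum.group[of "{x \<in> A. P x}" "f ` A" f "\<lambda>_. 1 :: nat"] \<open>finite A\<close>
    by (simp add: conj_ac)
  then have "real (card {x \<in> A. P x}) = (\<Sum>v \<in> f ` A. real (card {y \<in> A. f y = v \<and> P y}))"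
    by simp
  also have "\<dots> \<le> (\<Sum>v \<in> f ` A. b)"
  proof (rule sum_mono)
    fix v assume "v \<in> f ` A"
    show "real (card {y \<in> A. f y = v \<and> P y}) \<le> b"
    proof (cases "\<exists>x \<in> A. f x = v \<and> P x")
      case True
      then show ?thesis using fibre_bound by blast
    next
      case False
      then have "{y \<in> A. f y = v \<and> P y} = {}"
        by blast
      then show ?thesis using \<open>0 \<le> b\<close> by (metis card.empty of_nat_0)
    qed
  qed
  finally have card_P: "card {x \<in> A. P x} \<le> b * card (f ` A)"
    by (simp add: mult.commute)
  show ?thesis
  proof (cases "A = {}")
    case True
    then show ?thesis using assms by simp
  next
    case False
    then have "0 < card (f ` A)"
      using \<open>finite A\<close> by (simp add: card_gt_0_iff)
    then show ?thesis
      using card_P \<open>0 < c\<close> unfolding card_A by (simp add: field_simps)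
  qed
qed

lemma is_merge_if_common_host:
  assumes "\<pi> \<in> perms n" "exact_pattern \<rho> \<pi>" "exact_pattern (shift \<rho> h) \<pi>"
  shows "\<exists>\<sigma>. is_merge \<sigma> \<rho> (shift \<rho> h)"
  using assms is_merge_filter unfolding perms_def exact_pattern_def by blast

lemma finite_patterns: "finite (patterns n k)"
  unfolding patterns_def
  by (rule finite_subset[OF _ finite_lists_length_eq[of "{1..int n}" k]]) auto

lemma patterns_same_set:
  assumes "\<rho> \<in> patterns n k"
  shows "{\<rho>' \<in> patterns n k. set \<rho>' = set \<rho>} = permutations_of_set (set \<rho>)"
  using assms unfolding patterns_def permutations_of_set_def by (auto simp: distinct_card[symmetric])

theorem lemma3p5:
  fixes n k t :: nat and h :: int
  assumes "0 < n" and "0 < k" and "k \<le> n" and "0 < h"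
  shows "real (card {\<rho> \<in> patterns n k.
            card (set \<rho> \<inter> set (shift \<rho> h)) \<ge> t \<and>
            (\<exists>\<pi> \<in> perms n. exact_pattern \<rho> \<pi> \<and> exact_pattern (shift \<rho> h) \<pi>)})
         / real (card (patterns n k))
     \<le> (2::real) powi (2 * int k - int t) * (real k) powi (int k - int t) / fact k"
proof (subst of_nat_fact[symmetric], rule card_ratio_le_by_fibres[where f = set, OF finite_patterns])
  let ?P = "\<lambda>\<rho>. t \<le> card (set \<rho> \<inter> set (shift \<rho> h)) \<and>
    (\<exists>\<pi> \<in> perms n. exact_pattern \<rho> \<pi> \<and> exact_pattern (shift \<rho> h) \<pi>)"
  fix \<rho> assume \<rho>: "\<rho> \<in> patterns n k"
  then have S: "finite (set \<rho>)" "set \<rho> \<noteq> {}" "card (set \<rho>) = k"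
    using \<open>0 < k\<close> unfolding patterns_def by (auto simp: distinct_card)
  show "card {\<rho>' \<in> patterns n k. set \<rho>' = set \<rho>} = fact k"
    using patterns_same_set[OF \<rho>] S by simp
  assume "?P \<rho>"
  then have overlap: "t \<le> card (set \<rho> \<inter> (\<lambda>x. x + h) ` set \<rho>)"
    unfolding shift_def by simp
  have "{\<rho>' \<in> patterns n k. set \<rho>' = set \<rho> \<and> ?P \<rho>'}
    \<subseteq> {\<rho>' \<in> permutations_of_set (set \<rho>). \<exists>\<sigma>. is_merge \<sigma> \<rho>' (shift \<rho>' h)}"
    unfolding patterns_def permutations_of_set_def using is_merge_if_common_host by blast
  then have "card {\<rho>' \<in> patterns n k. set \<rho>' = set \<rho> \<and> ?P \<rho>'}
    \<le> card {\<rho>' \<in> permutations_of_set (set \<rho>). \<exists>\<sigma>. is_merge \<sigma> \<rho>' (shift \<rho>' h)}"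
    by (intro card_mono) simp_all
  then show "real (card {\<rho>' \<in> patterns n k. set \<rho>' = set \<rho> \<and> ?P \<rho>'})
    \<le> 2 powi (2 * int k - int t) * real k powi (int k - int t)"
    using card_shift_mergeable_le_powi[OF S(1,2) \<open>0 < h\<close> overlap] S(3) of_nat_mono by fastforce
qed auto

end
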